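(* Let $G=GL_{d+1}(L)$ with the setting below and $\xi$ given by $(a_1,\dots,a_{d+1})$, $a_1\le\dots\le a_{d+1}$. Then $T'_\xi(K)$ consists of all $\zeta\in T'(K)$ such that the polygon $\mathcal{P}\big((\mathrm{val}_L(\zeta_1),\dots,\mathrm{val}_L(\zeta_{d+1}))^{dom}\big)$ lies on or above the polygon $\mathcal{P}(a_1,a_2+[L:\mathbb{Q}_p],\dots,a_{d+1}+d[L:\mathbb{Q}_p])$ and both polygons have the same endpoint.
   Context: $L$ is a finite extension of $\mathbb{Q}_p$ with ring of integers $o_L$, prime element $\pi_L$, residue field cardinality $q$, normalized absolute value $|\ |_L$; $K$ a complete extension field of $\mathbb{Q}_p$ containing $L$; $\mathrm{val}_L:K^\times\to\mathbb{R}$ with $\mathrm{val}_L(L^\times)=\mathbb{Z}$. $G=GL_{d+1}(L)$, $P$ lower triangular Borel, $T$ diagonal torus, $U_0=GL_{d+1}(o_L)$, $\Lambda=T/(T\cap U_0)$, $\lambda:T\to\Lambda$ the projection, $W=S_{d+1}$ acting by conjugation, $\Phi^+$ roots of $T$ in $\mathrm{Lie}(P)$, $T^{--}=\{t:|\alpha(t)|_L\ge1\ \forall\alpha\in\Phi^+\}$, $\Lambda^{--}=\lambda(T^{--})$. $\xi(\mathrm{diag}(g_i))=\prod g_i^{a_i}$. $\gamma_\xi(w,\lambda(t)):=\big(\prod_{\alpha\in\Phi^+\setminus{}^{w^{-1}}\Phi^+}|\alpha(t)|_L\big)\pi_L^{\mathrm{val}_L(\xi({}^wt))-\mathrm{val}_L(\xi(t))}$,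 $\gamma_\xi^{dom}(\lambda):=\gamma_\xi(w,\lambda)$ for $w$ with ${}^w\lambda\in\Lambda^{--}$. $T'(K)=\mathrm{Hom}(\Lambda,K^\times)$, $T'_\xi(K)=\{\zeta:|\zeta(\lambda)|\le|\gamma_\xi^{dom}(\lambda)|\ \forall\lambda\}$. Coordinates: $\zeta_i:=q^{i-1}\pi_L^{a_i}\zeta(\lambda_{\{i\}})$ where $\lambda_{\{i\}}$ is the class of the diagonal matrix with $\pi_L$ in place $i$ and $1$ elsewhere. For $r\in\mathbb{R}^{d+1}$, $r^{dom}$ is its rearrangement in increasing order, and for an increasing sequence $r_1\le\dots\le r_{d+1}$, $\mathcal{P}(r)$ is the convex polygon through $(0,0),(1,r_1),(2,r_1+r_2),\dots,(d+1,r_1+\dots+r_{d+1})$. *)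

theory Defs
  imports Complex_Main "HOL-Combinatorics.Permutations" "HOL-Computational_Algebra.Primes"
begin

text \<open>Abstract valuation-theoretic setting: K is a field of characteristic 0 with a
  (real-valued, additive) valuation val = val_L, normalised so that val(pi_L) = 1.
  p is the residue characteristic, e the ramification index, f the residue degree of L,
  so q = p^f and [L:Q_p] = e*f.\<close>
definition padic_setting :: "('k::field \<Rightarrow> real) \<Rightarrow> 'k \<Rightarrow> nat \<Rightarrow> nat \<Rightarrow> nat \<Rightarrow> bool" where
  "padic_setting val piL p e f \<longleftrightarrow>
     prime p \<and> e \<ge> 1 \<and> f \<ge> 1 \<and> CHAR('k) = 0 \<and>
     (\<forall>x y. x \<noteq> 0 \<longrightarrow> y \<noteq> 0 \<longrightarrow> val (x * y) = val x + val y) \<and>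
     (\<forall>x y. x \<noteq> 0 \<longrightarrow> y \<noteq> 0 \<longrightarrow> x + y \<noteq> 0 \<longrightarrow> min (val x) (val y) \<le> val (x + y)) \<and>
     piL \<noteq> 0 \<and> val piL = 1 \<and> val (of_nat p) = real e"

definition absK :: "nat \<Rightarrow> ('k::field \<Rightarrow> real) \<Rightarrow> 'k \<Rightarrow> real" where
  "absK q val x = (if x = 0 then 0 else real q powr (- val x))"

text \<open>Lambda = T/(T cap U_0) identified with Z^{d+1} (indices 1..d+1) via
  lambda(diag(t_i)) = (val_L t_i)_i.\<close>
definition Lambda :: "nat \<Rightarrow> (nat \<Rightarrow> int) set" where
  "Lambda d = {\<mu>. \<forall>i. i \<notin> {1..d+1} \<longrightarrow> \<mu> i = 0}"

text \<open>lambda_{i}: class of the diagonal matrix with pi_L in place i.\<close>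
definition lam_unit :: "nat \<Rightarrow> nat \<Rightarrow> int" where
  "lam_unit i = (\<lambda>j. if j = i then 1 else 0)"

definition Tprime :: "nat \<Rightarrow> ((nat \<Rightarrow> int) \<Rightarrow> 'k::field) set" where
  "Tprime d = {\<zeta>. (\<forall>\<mu>\<in>Lambda d. \<zeta> \<mu> \<noteq> 0) \<and>
                  (\<forall>\<mu>\<in>Lambda d. \<forall>\<nu>\<in>Lambda d. \<zeta> (\<lambda>i. \<mu> i + \<nu> i) = \<zeta> \<mu> * \<zeta> \<nu>)}"

text \<open>Conjugation action of w in S_{d+1}: (w t w^{-1})_{w(i)} = t_i.\<close>
definition wact :: "(nat \<Rightarrow> nat) \<Rightarrow> (nat \<Rightarrow> int) \<Rightarrow> (nat \<Rightarrow> int)" where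
  "wact w \<mu> = \<mu> \<circ> inv w"

text \<open>Lambda^{--}: |alpha(t)| >= 1 for the roots t_i/t_j (i > j) of the lower Borel,
  i.e. the valuations are non-increasing.\<close>
definition dominant :: "nat \<Rightarrow> (nat \<Rightarrow> int) \<Rightarrow> bool" where
  "dominant d \<mu> \<longleftrightarrow> (\<forall>i\<in>{1..d+1}. \<forall>j\<in>{1..d+1}. i \<le> j \<longrightarrow> \<mu> j \<le> \<mu> i)"

text \<open>gamma_xi(w, lambda): the positive roots alpha = e_i - e_j (i > j) with
  w.alpha not positive are those with w i < w j; |alpha(t)|_L = q^(mu_j - mu_i).\<close>
definition gamma :: "'k::field \<Rightarrow> nat \<Rightarrow> nat \<Rightarrow> (nat \<Rightarrow> int) \<Rightarrow> (nat \<Rightarrow> nat) \<Rightarrow> (nat \<Rightarrow> int) \<Rightarrow> 'k" where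
  "gamma piL q d a w \<mu> =
     of_nat q powi (\<Sum>(i, j)\<in>{(i, j). i \<in> {1..d+1} \<and> j \<in> {1..d+1} \<and> j < i \<and> w i < w j}. \<mu> j - \<mu> i)
     * piL powi ((\<Sum>i\<in>{1..d+1}. a i * wact w \<mu> i) - (\<Sum>i\<in>{1..d+1}. a i * \<mu> i))"

definition gamma_dom :: "'k::field \<Rightarrow> nat \<Rightarrow> nat \<Rightarrow> (nat \<Rightarrow> int) \<Rightarrow> (nat \<Rightarrow> int) \<Rightarrow> 'k" where
  "gamma_dom piL q d a \<mu> =
     gamma piL q d a (SOME w. w permutes {1..d+1} \<and> dominant d (wact w \<mu>)) \<mu>"

definition Txi :: "('k::field \<Rightarrow> real) \<Rightarrow> 'k \<Rightarrow> nat \<Rightarrow> nat \<Rightarrow> (nat \<Rightarrow> int) \<Rightarrow> ((nat \<Rightarrow> int) \<Rightarrow> 'k) set" where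
  "Txi val piL q d a = {\<zeta> \<in> Tprime d.
     \<forall>\<mu>\<in>Lambda d. absK q val (\<zeta> \<mu>) \<le> absK q val (gamma_dom piL q d a \<mu>)}"

definition zcoord :: "'k::field \<Rightarrow> nat \<Rightarrow> (nat \<Rightarrow> int) \<Rightarrow> ((nat \<Rightarrow> int) \<Rightarrow> 'k) \<Rightarrow> nat \<Rightarrow> 'k" where
  "zcoord piL q a \<zeta> i = of_nat q ^ (i - 1) * piL powi a i * \<zeta> (lam_unit i)"

text \<open>The polygon P(r) through (0,0),(1,r_1),(2,r_1+r_2),... as a piecewise linear
  function on [0, length r].\<close>
definition polygon :: "real list \<Rightarrow> real \<Rightarrow> real" where
  "polygon r x = sum_list (take (nat \<lfloor>x\<rfloor>) r)
     + (x - of_int \<lfloor>x\<rfloor>) * (if nat \<lfloor>x\<rfloor> < length r then r ! nat \<lfloor>x\<rfloor> else 0)"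

definition poly_above_same_end :: "real list \<Rightarrow> real list \<Rightarrow> bool" where
  "poly_above_same_end r s \<longleftrightarrow> length r = length s \<and>
     (\<forall>x\<in>{0..real (length r)}. polygon s x \<le> polygon r x) \<and>
     polygon r (real (length r)) = polygon s (real (length s))"

end

(*
  Fix a character zeta of Lambda = Z^(d+1) and put z_i = val(zeta_i), b_i = a_i + (i-1)[L:Q_p].
  Valuations turn |zeta(mu)| <= |gamma_xi^dom(mu)| into a linear inequality
  sum_k b_k nu_k <= sum_i mu_i z_i, where nu is the non-increasing rearrangement of mu: the
  q-power in gamma counts the inversions of the sorting permutation, and this count equals
  sum_k (k-1) nu_k - sum_i (i-1) mu_i.
  Testing indicator vectors mu = 1_S shows that every |S|-element subsum of the z_i is at least
  b_1 + ... + b_|S|, and mu = -1 forces equal totals; by sorting the z_i this is exactly the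
  polygon condition.  Conversely, summation by parts writes sum_i mu_i z_i - sum_k b_k nu_k
  as a combination of these subset inequalities with the nonnegative weights nu_k - nu_(k+1).
*)
theory Submission
  imports Defs "HOL-Library.Infinite_Set"
begin

lemma additive_on_Lambda_int_mult:
  fixes \<phi> :: "(nat \<Rightarrow> int) \<Rightarrow> real"
  assumes additive: "\<forall>\<mu>\<in>Lambda d. \<forall>\<nu>\<in>Lambda d. \<phi> (\<lambda>i. \<mu> i + \<nu> i) = \<phi> \<mu> + \<phi> \<nu>"
    and \<mu>: "\<mu> \<in> Lambda d"
  shows "\<phi> (\<lambda>i. k * \<mu> i) = of_int k * \<phi> \<mu>"
proof -
  have mult_in: "(\<lambda>i. m * \<mu> i) \<in> Lambda d" for m
    using \<mu> by (simp add: Lambda_def)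
  have step: "\<phi> (\<lambda>i. (m + 1) * \<mu> i) = \<phi> (\<lambda>i. m * \<mu> i) + \<phi> \<mu>" for m
    using additive mult_in[of m] \<mu> by (simp add: distrib_right)
  show ?thesis
  proof (induction k rule: int_induct[where k = 0])
    case base
    show ?case using step[of 0] by simp
  next
    case (step1 m)
    then show ?case using step[of m] by (simp add: algebra_simps)
  next
    case (step2 m)
    then show ?case using step[of "m - 1"] by (simp add: algebra_simps)
  qed
qed

lemma additive_on_Lambda_eq_sum:
  fixes \<phi> :: "(nat \<Rightarrow> int) \<Rightarrow> real"
  assumes additive: "\<forall>\<mu>\<in>Lambda d. \<forall>\<nu>\<in>Lambda d. \<phi> (\<lambda>i. \<mu> i + \<nu> i) = \<phi> \<mu> + \<phi> \<nu>"
    and \<mu>: "\<mu> \<in> Lambda d"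
  shows "\<phi> \<mu> = (\<Sum>i\<in>{1..d+1}. of_int (\<mu> i) * \<phi> (lam_unit i))"
proof -
  have unit_in: "lam_unit i \<in> Lambda d" if "i \<in> {1..d+1}" for i
    using that by (auto simp: Lambda_def lam_unit_def)
  have "\<phi> (\<lambda>j. if j \<in> A then \<mu> j else 0) = (\<Sum>i\<in>A. of_int (\<mu> i) * \<phi> (lam_unit i))"
    if "A \<subseteq> {1..d+1}" for A
    using finite_subset[OF that finite_atLeastAtMost] that
  proof (induction A rule: finite_induct)
    case empty
    show ?case using additive_on_Lambda_int_mult[OF additive, of "\<lambda>i. 0" 0] by (simp add: Lambda_def)
  next
    case (insert x A)
    have restrict_in: "(\<lambda>j. if j \<in> A then \<mu> j else 0) \<in> Lambda d"
      using insert.prems by (auto simp: Lambda_def)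
    have "(\<lambda>j. if j \<in> insert x A then \<mu> j else 0)
        = (\<lambda>j. (if j \<in> A then \<mu> j else 0) + \<mu> x * lam_unit x j)"
      using insert.hyps by (auto simp: lam_unit_def)
    then show ?case
      using additive restrict_in unit_in insert
        additive_on_Lambda_int_mult[OF additive unit_in, of x "\<mu> x"]
      by (simp add: Lambda_def)
  qed
  moreover have "(\<lambda>j. if j \<in> {1..d+1} then \<mu> j else 0) = \<mu>"
    using \<mu> by (auto simp: Lambda_def)
  ultimately show ?thesis by (metis order_refl)
qed

lemma wact_apply_perm: "bij w \<Longrightarrow> wact w \<mu> (w i) = \<mu> i"
  by (simp add: wact_def bij_is_inj)

lemma int_pred_eq_sum_less: "int (k - 1) = (\<Sum>j\<in>{1..n}. of_bool (j < k))" if "k \<in> {1..n}" for k n :: nat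
proof -
  have "{1..n} \<inter> {j. j < k} = {1..<k}" using that by auto
  then show ?thesis using that by simp
qed

lemma sum_pred_mult_wact:
  fixes \<mu> :: "nat \<Rightarrow> int"
  assumes w: "w permutes {1..n}"
  shows "(\<Sum>k\<in>{1..n}. int (k - 1) * wact w \<mu> k) = (\<Sum>i\<in>{1..n}. \<Sum>j\<in>{1..n}. of_bool (w j < w i) * \<mu> i)"
proof -
  have "(\<Sum>k\<in>{1..n}. int (k - 1) * wact w \<mu> k) = (\<Sum>i\<in>{1..n}. int (w i - 1) * \<mu> i)"
    using w by (subst sum.permute[where p = w]) (auto simp: wact_apply_perm permutes_bij)
  also have "\<dots> = (\<Sum>i\<in>{1..n}. \<Sum>j\<in>{1..n}. of_bool (w j < w i) * \<mu> i)"
  proof (intro sum.cong refl)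
    fix i assume "i \<in> {1..n}"
    then have "int (w i - 1) = (\<Sum>j\<in>{1..n}. of_bool (j < w i))"
      using int_pred_eq_sum_less permutes_in_image[OF w] by blast
    also have "\<dots> = (\<Sum>j\<in>{1..n}. of_bool (w j < w i))"
      using w by (subst sum.permute[where p = w]) (auto simp: comp_def)
    finally show "int (w i - 1) * \<mu> i = (\<Sum>j\<in>{1..n}. of_bool (w j < w i) * \<mu> i)"
      by (simp add: sum_distrib_right)
  qed
  finally show ?thesis .
qed

lemma sum_inversions_eq:
  fixes \<mu> :: "nat \<Rightarrow> int"
  assumes w: "w permutes {1..n}"
  shows "(\<Sum>(i, j)\<in>{(i, j). i \<in> {1..n} \<and> j \<in> {1..n} \<and> j < i \<and> w i < w j}. \<mu> j - \<mu> i)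
    = (\<Sum>k\<in>{1..n}. int (k - 1) * wact w \<mu> k) - (\<Sum>i\<in>{1..n}. int (i - 1) * \<mu> i)"
proof -
  define N where "N = {1..n}"
  have "(\<Sum>(i, j)\<in>{(i, j). i \<in> N \<and> j \<in> N \<and> j < i \<and> w i < w j}. \<mu> j - \<mu> i)
      = (\<Sum>i\<in>N. \<Sum>j\<in>N. of_bool (j < i \<and> w i < w j) * (\<mu> j - \<mu> i))"
    unfolding sum.cartesian_product
    by (rule sum.mono_neutral_cong_left) (auto simp: N_def)
  also have "\<dots> = (\<Sum>i\<in>N. \<Sum>j\<in>N. of_bool (i < j \<and> w j < w i) * \<mu> i)
                  - (\<Sum>i\<in>N. \<Sum>j\<in>N. of_bool (j < i \<and> w i < w j) * \<mu> i)"
    by (subst sum.swap) (simp add: algebra_simps sum_subtractf)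
  also have "\<dots> = (\<Sum>i\<in>N. \<Sum>j\<in>N. of_bool (w j < w i) * \<mu> i) - (\<Sum>i\<in>N. \<Sum>j\<in>N. of_bool (j < i) * \<mu> i)"
  proof -
    have "of_bool (i < j \<and> w j < w i) - of_bool (j < i \<and> w i < w j)
        = (of_bool (w j < w i) - of_bool (j < i) :: int)" for i j
      using inj_eq[OF permutes_inj[OF w], of i j] by (cases i j rule: linorder_cases) auto
    then show ?thesis by (simp add: sum_subtractf[symmetric] left_diff_distrib[symmetric])
  qed
  also have "\<dots> = (\<Sum>k\<in>N. int (k - 1) * wact w \<mu> k) - (\<Sum>i\<in>N. int (i - 1) * \<mu> i)"
    using sum_pred_mult_wact[OF w, of \<mu>] sum_pred_mult_wact[OF permutes_id, of \<mu>]
    by (simp add: N_def wact_def)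
  finally show ?thesis unfolding N_def .
qed

definition xi_slope :: "nat \<Rightarrow> nat \<Rightarrow> (nat \<Rightarrow> int) \<Rightarrow> nat \<Rightarrow> real" where
  "xi_slope e f a = (\<lambda>i. real_of_int (a i) + real (i - 1) * real (e * f))"

context
  fixes val :: "'k::field \<Rightarrow> real" and piL :: 'k and p e f :: nat
  assumes setting: "padic_setting val piL p e f"
begin

lemma val_mult: "x \<noteq> 0 \<Longrightarrow> y \<noteq> 0 \<Longrightarrow> val (x * y) = val x + val y"
  using setting unfolding padic_setting_def by blast

lemma val_one: "val 1 = 0"
  using val_mult[of 1 1] by simp

lemma val_power: "x \<noteq> 0 \<Longrightarrow> val (x ^ n) = real n * val x"
  by (induction n) (simp_all add: val_one val_mult algebra_simps)

lemma val_power_int: "x \<noteq> 0 \<Longrightarrow> val (x powi k) = of_int k * val x"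
proof -
  assume "x \<noteq> 0"
  then have "val (inverse x) = - val x" using val_mult[of x "inverse x"] by (simp add: val_one)
  then show ?thesis using \<open>x \<noteq> 0\<close> by (simp add: power_int_def val_power)
qed

lemma piL_nonzero: "piL \<noteq> 0" and val_piL: "val piL = 1"
  using setting unfolding padic_setting_def by auto

lemma of_nat_prime_power_nonzero: "(of_nat (p ^ n) :: 'k) \<noteq> 0"
  using setting unfolding padic_setting_def by (simp add: of_nat_eq_0_iff_char_dvd prime_gt_0_nat)

lemma val_of_nat_q: "val (of_nat (p ^ f) :: 'k) = real (e * f)"
proof -
  have "val (of_nat p :: 'k) = real e" using setting unfolding padic_setting_def by blast
  then show ?thesis
    using val_power[of "of_nat p" f] of_nat_prime_power_nonzero[of 1] by simp
qed

lemma absK_le_iff: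
  assumes "x \<noteq> 0" "y \<noteq> 0"
  shows "absK (p ^ f) val x \<le> absK (p ^ f) val y \<longleftrightarrow> val y \<le> val x"
proof -
  have "prime p" "f \<ge> 1" using setting unfolding padic_setting_def by auto
  then have "1 < p ^ f" by (intro one_less_power prime_gt_1_nat) auto
  then have "1 < real (p ^ f)" by linarith
  then show ?thesis
    using assms powr_le_cancel_iff[of "real (p ^ f)" "- val x" "- val y"] unfolding absK_def by simp
qed


lemma val_character:
  assumes \<zeta>: "\<zeta> \<in> Tprime d" and \<mu>: "\<mu> \<in> Lambda d"
  shows "val (\<zeta> \<mu>) = (\<Sum>i\<in>{1..d+1}. of_int (\<mu> i) * val (\<zeta> (lam_unit i)))"
proof (rule additive_on_Lambda_eq_sum[OF _ \<mu>])
  show "\<forall>\<mu>\<in>Lambda d. \<forall>\<nu>\<in>Lambda d. val (\<zeta> (\<lambda>i. \<mu> i + \<nu> i)) = val (\<zeta> \<mu>) + val (\<zeta> \<nu>)"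
    using \<zeta> unfolding Tprime_def by (simp add: val_mult)
qed

lemma val_zcoord:
  assumes "\<zeta> (lam_unit i) \<noteq> 0"
  shows "val (zcoord piL (p ^ f) a \<zeta> i) = val (\<zeta> (lam_unit i)) + xi_slope e f a i"
  using assms of_nat_prime_power_nonzero[of f] piL_nonzero
  by (simp add: zcoord_def xi_slope_def val_mult val_power val_power_int val_of_nat_q val_piL
      del: of_nat_power)

lemma gamma_nonzero: "gamma piL (p ^ f) d a w \<mu> \<noteq> 0"
  using of_nat_prime_power_nonzero[of f] piL_nonzero by (simp add: gamma_def)

lemma val_gamma:
  assumes w: "w permutes {1..d+1}"
  shows "val (gamma piL (p ^ f) d a w \<mu>)
    = (\<Sum>k\<in>{1..d+1}. xi_slope e f a k * of_int (wact w \<mu> k)) - (\<Sum>i\<in>{1..d+1}. xi_slope e f a i * of_int (\<mu> i))"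
proof -
  define inversions where "inversions =
    (\<Sum>(i, j)\<in>{(i, j). i \<in> {1..d+1} \<and> j \<in> {1..d+1} \<and> j < i \<and> w i < w j}. \<mu> j - \<mu> i)"
  define shift where "shift = (\<Sum>i\<in>{1..d+1}. a i * wact w \<mu> i) - (\<Sum>i\<in>{1..d+1}. a i * \<mu> i)"
  have "val (gamma piL (p ^ f) d a w \<mu>) = of_int inversions * real (e * f) + of_int shift"
    using of_nat_prime_power_nonzero[of f] piL_nonzero
    by (simp add: gamma_def inversions_def shift_def val_mult val_power_int val_of_nat_q val_piL
        del: of_nat_power)
  also have "\<dots> = (\<Sum>k\<in>{1..d+1}. xi_slope e f a k * of_int (wact w \<mu> k)) - (\<Sum>i\<in>{1..d+1}. xi_slope e f a i * of_int (\<mu> i))"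
    unfolding inversions_def sum_inversions_eq[OF w] shift_def xi_slope_def
    by (simp add: sum_subtractf sum.distrib sum_distrib_left sum_distrib_right algebra_simps of_nat_diff)
  finally show ?thesis .
qed

lemma absK_le_absK_gamma_iff:
  assumes \<zeta>: "\<zeta> \<in> Tprime d" and \<mu>: "\<mu> \<in> Lambda d" and w: "w permutes {1..d+1}"
  shows "absK (p ^ f) val (\<zeta> \<mu>) \<le> absK (p ^ f) val (gamma piL (p ^ f) d a w \<mu>)
    \<longleftrightarrow> (\<Sum>k\<in>{1..d+1}. xi_slope e f a k * of_int (wact w \<mu> k))
        \<le> (\<Sum>i\<in>{1..d+1}. of_int (\<mu> i) * val (zcoord piL (p ^ f) a \<zeta> i))"
proof -
  have unit_nonzero: "\<zeta> (lam_unit i) \<noteq> 0" if "i \<in> {1..d+1}" for i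
    using \<zeta> that unfolding Tprime_def Lambda_def lam_unit_def by auto
  have sum_eq: "(\<Sum>i\<in>{1..d+1}. of_int (\<mu> i) * val (zcoord piL (p ^ f) a \<zeta> i))
      = val (\<zeta> \<mu>) + (\<Sum>i\<in>{1..d+1}. xi_slope e f a i * of_int (\<mu> i))"
  proof -
    have "(\<Sum>i\<in>{1..d+1}. of_int (\<mu> i) * val (zcoord piL (p ^ f) a \<zeta> i))
        = (\<Sum>i\<in>{1..d+1}. of_int (\<mu> i) * val (\<zeta> (lam_unit i)) + xi_slope e f a i * of_int (\<mu> i))"
      by (intro sum.cong refl) (simp add: val_zcoord unit_nonzero algebra_simps)
    then show ?thesis by (simp only: sum.distrib val_character[OF \<zeta> \<mu>])
  qed
  have "\<zeta> \<mu> \<noteq> 0" using \<zeta> \<mu> unfolding Tprime_def by blast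
  then show ?thesis
    unfolding absK_le_iff[OF \<open>\<zeta> \<mu> \<noteq> 0\<close> gamma_nonzero] val_gamma[OF w] sum_eq by linarith
qed

end

lemma sum_lessThan_card_le_sum_of_mono_on:
  fixes g :: "nat \<Rightarrow> 'a::ordered_comm_monoid_add"
  assumes mono: "mono_on {..<n} g" and T: "T \<subseteq> {..<n}"
  shows "(\<Sum>t<card T. g t) \<le> sum g T"
proof -
  have fin: "finite T" using T finite_subset by blast
  have "(\<Sum>t<card T. g t) \<le> (\<Sum>t<card T. g (enumerate T t))"
  proof (rule sum_mono)
    fix t assume "t \<in> {..<card T}"
    then have "t \<le> enumerate T t" "enumerate T t \<in> T"
      using fin by (auto intro: finite_le_enumerate finite_enumerate_in_set)
    then show "g t \<le> g (enumerate T t)" by (intro mono_onD[OF mono]) (use T in auto)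
  qed
  also have "\<dots> = sum g T"
    using sum.reindex_bij_betw[OF finite_bij_enumerate[OF fin]] .
  finally show ?thesis .
qed

lemma sum_list_take_eq_sum_nth: "k \<le> length xs \<Longrightarrow> sum_list (take k xs) = (\<Sum>t<k. xs ! t)"
  by (simp add: sum_list_sum_nth atLeast0LessThan min_def)

lemma sort_map_upt_enumeration:
  fixes z :: "nat \<Rightarrow> 'a::linorder"
  obtains \<sigma> where "bij_betw \<sigma> {..<n} {1..n}" "\<And>t. t < n \<Longrightarrow> sort (map z [1..<n+1]) ! t = z (\<sigma> t)"
proof -
  define xs where "xs = map z [1..<n+1]"
  obtain p where p: "p permutes {..<length xs}" "permute_list p xs = sort xs"
    using mset_eq_permutation[of "sort xs" xs] by auto
  have len: "length xs = n" by (simp add: xs_def)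
  have "bij_betw Suc {..<n} {1..n}"
    by (rule bij_betwI[where g = "\<lambda>k. k - 1"]) auto
  then have "bij_betw (Suc \<circ> p) {..<n} {1..n}"
    using permutes_imp_bij[OF p(1)] unfolding len by (rule bij_betw_trans[rotated])
  moreover have "sort xs ! t = z (Suc (p t))" if "t < n" for t
  proof -
    have "p t < n" using permutes_in_image[OF p(1)] that by (simp add: len)
    moreover have "sort xs ! t = xs ! p t"
      using permute_list_nth[OF p(1)] p(2) that len by metis
    ultimately show ?thesis by (simp add: xs_def del: upt_Suc)
  qed
  ultimately show ?thesis using that unfolding xs_def by auto
qed

lemma sum_take_sort_le_sum:
  fixes z :: "nat \<Rightarrow> 'a::{linorder, ordered_comm_monoid_add}"
  assumes S: "S \<subseteq> {1..n}"
  shows "sum_list (take (card S) (sort (map z [1..<n+1]))) \<le> sum z S"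
proof -
  obtain \<sigma> where \<sigma>: "bij_betw \<sigma> {..<n} {1..n}" "\<And>t. t < n \<Longrightarrow> sort (map z [1..<n+1]) ! t = z (\<sigma> t)"
    using sort_map_upt_enumeration[of n z] by blast
  define s where "s = sort (map z [1..<n+1])"
  define T where "T = {t \<in> {..<n}. \<sigma> t \<in> S}"
  have T_bij: "bij_betw \<sigma> T S"
    using S \<sigma>(1) unfolding T_def bij_betw_def inj_on_def by auto
  have len: "length s = n" by (simp add: s_def)
  have "card S \<le> n" using card_mono[OF _ S] by simp
  then have "sum_list (take (card S) s) = (\<Sum>t<card T. s ! t)"
    using bij_betw_same_card[OF T_bij] len by (simp add: sum_list_take_eq_sum_nth)
  also have "\<dots> \<le> (\<Sum>t\<in>T. s ! t)"
    by (rule sum_lessThan_card_le_sum_of_mono_on[where n = n])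
      (auto simp: T_def s_def len mono_on_def intro: sorted_nth_mono)
  also have "\<dots> = (\<Sum>t\<in>T. z (\<sigma> t))"
    using \<sigma>(2) by (simp add: T_def s_def)
  also have "\<dots> = sum z S"
    by (rule sum.reindex_bij_betw[OF T_bij])
  finally show ?thesis unfolding s_def .
qed

lemma sum_take_sort_attained:
  fixes z :: "nat \<Rightarrow> 'a::{linorder, comm_monoid_add}"
  assumes "k \<le> n"
  obtains S where "S \<subseteq> {1..n}" "card S = k" "sum z S = sum_list (take k (sort (map z [1..<n+1])))"
proof -
  obtain \<sigma> where \<sigma>: "bij_betw \<sigma> {..<n} {1..n}" "\<And>t. t < n \<Longrightarrow> sort (map z [1..<n+1]) ! t = z (\<sigma> t)"
    using sort_map_upt_enumeration[of n z] by blast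
  have bij: "bij_betw \<sigma> {..<k} (\<sigma> ` {..<k})"
    using assms bij_betw_subset[OF \<sigma>(1)] by auto
  show ?thesis
  proof
    show "\<sigma> ` {..<k} \<subseteq> {1..n}" "card (\<sigma> ` {..<k}) = k"
      using assms \<sigma>(1) bij_betw_same_card[OF bij] by (auto simp: bij_betw_def)
    have "sum_list (take k (sort (map z [1..<n+1]))) = (\<Sum>t<k. z (\<sigma> t))"
      using assms \<sigma>(2) by (simp add: sum_list_take_eq_sum_nth)
    then show "sum z (\<sigma> ` {..<k}) = sum_list (take k (sort (map z [1..<n+1])))"
      using sum.reindex_bij_betw[OF bij, of z] by simp
  qed
qed

lemma partial_sums_le_sort_iff:
  fixes z :: "nat \<Rightarrow> 'a::{linorder, ordered_comm_monoid_add}"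
  shows "(\<forall>k\<le>n. B k \<le> sum_list (take k (sort (map z [1..<n+1]))))
     \<longleftrightarrow> (\<forall>S\<subseteq>{1..n}. B (card S) \<le> sum z S)"
proof
  assume partial: "\<forall>k\<le>n. B k \<le> sum_list (take k (sort (map z [1..<n+1])))"
  show "\<forall>S\<subseteq>{1..n}. B (card S) \<le> sum z S"
  proof (intro allI impI)
    fix S assume S: "S \<subseteq> {1..n}"
    then have "card S \<le> n" using card_mono[OF _ S] by simp
    then have "B (card S) \<le> sum_list (take (card S) (sort (map z [1..<n+1])))" using partial by blast
    also have "\<dots> \<le> sum z S" by (rule sum_take_sort_le_sum[OF S])
    finally show "B (card S) \<le> sum z S" .
  qed
next
  assume "\<forall>S\<subseteq>{1..n}. B (card S) \<le> sum z S"
  then show "\<forall>k\<le>n. B k \<le> sum_list (take k (sort (map z [1..<n+1])))"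
    by (metis sum_take_sort_attained)
qed

lemma summation_by_parts:
  fixes \<nu> c :: "nat \<Rightarrow> 'a::comm_ring"
  shows "(\<Sum>k\<in>{1..m}. \<nu> k * c k)
    = (\<Sum>k\<in>{1..<m}. (\<nu> k - \<nu> (Suc k)) * (\<Sum>t\<in>{1..k}. c t)) + \<nu> m * (\<Sum>t\<in>{1..m}. c t)"
proof (induction m)
  case (Suc m)
  then show ?case
    by (cases "m = 0") (simp_all add: atLeastLessThanSuc algebra_simps)
qed simp

lemma wact_indicator:
  assumes "bij w"
  shows "wact w (\<lambda>i. of_bool (i \<in> S)) = (\<lambda>i. of_bool (i \<in> w ` S))"
proof -
  have "inv w i \<in> S \<longleftrightarrow> i \<in> w ` S" for i
    using assms by (metis bij_inv_eq_iff image_iff)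
  then show ?thesis by (simp add: wact_def comp_def)
qed

lemma dominant_indicator_eq_initial_segment:
  assumes Q: "Q \<subseteq> {1..d+1}" and dom: "dominant d (\<lambda>i. of_bool (i \<in> Q))"
  shows "Q = {1..card Q}"
proof -
  have fin: "finite Q" using Q finite_subset by blast
  have down: "{1..x} \<subseteq> Q" if "x \<in> Q" for x
    using that Q dom unfolding dominant_def by force
  have "Q \<subseteq> {1..card Q}"
  proof
    fix x assume "x \<in> Q"
    then have "card {1..x} \<le> card Q" using card_mono[OF fin down] by blast
    then show "x \<in> {1..card Q}" using \<open>x \<in> Q\<close> Q by auto
  qed
  then show ?thesis
    by (metis card_atLeastAtMost card_subset_eq diff_Suc_1 finite_atLeastAtMost)
qed

lemma dominant_rearrangement_exists:
  fixes \<mu> :: "nat \<Rightarrow> int"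
  shows "\<exists>w. w permutes {1..d+1} \<and> dominant d (wact w \<mu>)"
proof -
  define n where "n = d + 1"
  obtain \<sigma> where \<sigma>: "bij_betw \<sigma> {..<n} {1..n}" "\<And>t. t < n \<Longrightarrow> sort (map \<mu> [1..<n+1]) ! t = \<mu> (\<sigma> t)"
    using sort_map_upt_enumeration[of n \<mu>] by blast
  define v where "v = (\<lambda>k. if k \<in> {1..n} then \<sigma> (n - k) else k)"
  have "bij_betw (\<lambda>k. n - k) {1..n} {..<n}"
    by (rule bij_betwI[where g = "\<lambda>t. n - t"]) auto
  then have "bij_betw (\<sigma> \<circ> (\<lambda>k. n - k)) {1..n} {1..n}"
    using \<sigma>(1) by (rule bij_betw_trans)
  then have "bij_betw v {1..n} {1..n}"
    by (rule bij_betw_cong[THEN iffD1, rotated]) (simp add: v_def)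
  then have v: "v permutes {1..n}"
    by (rule bij_imp_permutes) (auto simp: v_def)
  have "wact (inv v) \<mu> k = sort (map \<mu> [1..<n+1]) ! (n - k)" if "k \<in> {1..n}" for k
    using that \<sigma>(2)[of "n - k"] v by (simp add: wact_def inv_inv_eq permutes_bij v_def)
  then have "dominant d (wact (inv v) \<mu>)"
    unfolding dominant_def n_def by (auto intro: sorted_nth_mono)
  then show ?thesis using permutes_inv[OF v] unfolding n_def by blast
qed

definition dom_perm :: "nat \<Rightarrow> (nat \<Rightarrow> int) \<Rightarrow> nat \<Rightarrow> nat" where
  "dom_perm d \<mu> = (SOME w. w permutes {1..d+1} \<and> dominant d (wact w \<mu>))"

lemma dom_perm: "dom_perm d \<mu> permutes {1..d+1} \<and> dominant d (wact (dom_perm d \<mu>) \<mu>)"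
  unfolding dom_perm_def by (rule someI_ex[OF dominant_rearrangement_exists])

lemma gamma_dom_eq_gamma_dom_perm: "gamma_dom piL q d a \<mu> = gamma piL q d a (dom_perm d \<mu>) \<mu>"
  unfolding gamma_dom_def dom_perm_def ..

lemma rearrangement_bound_indicator:
  fixes b :: "nat \<Rightarrow> real"
  assumes w: "w permutes {1..d+1}" and S: "S \<subseteq> {1..d+1}"
    and dom: "dominant d (wact w (\<lambda>i. of_bool (i \<in> S)))"
  shows "(\<Sum>k\<in>{1..d+1}. b k * of_int (wact w (\<lambda>i. of_bool (i \<in> S)) k)) = (\<Sum>i\<in>{1..card S}. b i)"
proof -
  have image: "w ` S \<subseteq> {1..d+1}" "card (w ` S) = card S"
    using S permutes_image[OF w] card_image[OF inj_on_subset[OF permutes_inj_on[OF w]]] by auto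
  have "(\<Sum>k\<in>{1..d+1}. b k * of_int (wact w (\<lambda>i. of_bool (i \<in> S)) k)) = sum b (w ` S)"
    by (simp only: wact_indicator[OF permutes_bij[OF w]] of_int_of_bool Collect_mem_eq
        sum_mult_of_bool_eq[OF finite_atLeastAtMost] Int_absorb1[OF image(1)])
  also have "w ` S = {1..card S}"
    using dominant_indicator_eq_initial_segment[OF image(1)] dom image(2)
    by (simp add: wact_indicator[OF permutes_bij[OF w]])
  finally show ?thesis .
qed

definition subset_sums_above :: "(nat \<Rightarrow> real) \<Rightarrow> (nat \<Rightarrow> real) \<Rightarrow> nat \<Rightarrow> bool" where
  "subset_sums_above z b n \<longleftrightarrow>
     (\<forall>S\<subseteq>{1..n}. (\<Sum>i\<in>{1..card S}. b i) \<le> sum z S) \<and> sum z {1..n} = sum b {1..n}"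

lemma rearrangement_bound_of_subset_sums_above:
  fixes b z :: "nat \<Rightarrow> real" and \<mu> :: "nat \<Rightarrow> int"
  assumes w: "w permutes {1..d+1}" and dom: "dominant d (wact w \<mu>)"
    and above: "subset_sums_above z b (d+1)"
  shows "(\<Sum>k\<in>{1..d+1}. b k * of_int (wact w \<mu> k)) \<le> (\<Sum>i\<in>{1..d+1}. of_int (\<mu> i) * z i)"
proof -
  define n where "n = d + 1"
  define \<nu> where "\<nu> k = real_of_int (wact w \<mu> k)" for k
  define C where "C k = (\<Sum>t\<in>{1..k}. z (inv w t) - b t)" for k
  have w': "inv w permutes {1..n}" using permutes_inv[OF w] by (simp add: n_def)
  have C_nonneg: "0 \<le> C k" if "k \<le> n" for k
  proof -
    have inj: "inj_on (inv w) {1..k}" by (rule permutes_inj_on[OF w'])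
    have "inv w ` {1..k} \<subseteq> {1..d+1}" using permutes_image[OF w'] that by (auto simp: n_def)
    then have "(\<Sum>i\<in>{1..card (inv w ` {1..k})}. b i) \<le> sum z (inv w ` {1..k})"
      using above unfolding subset_sums_above_def by blast
    then have "(\<Sum>i\<in>{1..k}. b i) \<le> sum z (inv w ` {1..k})"
      using card_image[OF inj] by simp
    also have "\<dots> = (\<Sum>t\<in>{1..k}. z (inv w t))" using sum.reindex[OF inj] by simp
    finally show ?thesis by (simp add: C_def sum_subtractf)
  qed
  have C_n: "C n = 0"
    using above sum.permute[OF w', of z]
    by (simp add: subset_sums_above_def C_def sum_subtractf n_def comp_def)
  have "(\<Sum>i\<in>{1..n}. of_int (\<mu> i) * z i) = (\<Sum>k\<in>{1..n}. \<nu> k * z (inv w k))"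
    using sum.permute[OF w', of "\<lambda>i. of_int (\<mu> i) * z i"] by (simp add: \<nu>_def wact_def)
  then have "(\<Sum>i\<in>{1..n}. of_int (\<mu> i) * z i) - (\<Sum>k\<in>{1..n}. b k * \<nu> k)
      = (\<Sum>k\<in>{1..n}. \<nu> k * (z (inv w k) - b k))"
    by (simp add: sum_subtractf algebra_simps)
  also have "\<dots> = (\<Sum>k\<in>{1..<n}. (\<nu> k - \<nu> (Suc k)) * C k) + \<nu> n * C n"
    unfolding C_def by (rule summation_by_parts)
  also have "\<dots> \<ge> 0"
  proof -
    have "\<nu> (Suc k) \<le> \<nu> k" if "k \<in> {1..<n}" for k
      using dom that unfolding dominant_def \<nu>_def n_def by simp
    then show ?thesis using C_nonneg C_n by (auto intro!: sum_nonneg)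
  qed
  finally show ?thesis by (simp add: \<nu>_def n_def)
qed

lemma subset_sums_above_of_rearrangement_bound:
  fixes b z :: "nat \<Rightarrow> real"
  assumes W: "\<And>\<mu>. W \<mu> permutes {1..d+1} \<and> dominant d (wact (W \<mu>) \<mu>)"
    and bound: "\<forall>\<mu>\<in>Lambda d. (\<Sum>k\<in>{1..d+1}. b k * of_int (wact (W \<mu>) \<mu> k)) \<le> (\<Sum>i\<in>{1..d+1}. of_int (\<mu> i) * z i)"
  shows "subset_sums_above z b (d+1)"
proof -
  have subset_bound: "(\<Sum>i\<in>{1..card S}. b i) \<le> sum z S" if S: "S \<subseteq> {1..d+1}" for S
  proof -
    define \<mu> where "\<mu> i = (of_bool (i \<in> S) :: int)" for i
    have "\<mu> \<in> Lambda d" using S by (auto simp: Lambda_def \<mu>_def)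
    then have "(\<Sum>k\<in>{1..d+1}. b k * of_int (wact (W \<mu>) \<mu> k)) \<le> (\<Sum>i\<in>{1..d+1}. of_int (\<mu> i) * z i)"
      using bound by blast
    moreover have "(\<Sum>k\<in>{1..d+1}. b k * of_int (wact (W \<mu>) \<mu> k)) = (\<Sum>i\<in>{1..card S}. b i)"
      using rearrangement_bound_indicator[OF _ S] W unfolding \<mu>_def by blast
    moreover have "(\<Sum>i\<in>{1..d+1}. of_int (\<mu> i) * z i) = sum z S"
      by (simp only: \<mu>_def of_int_of_bool sum_of_bool_mult_eq[OF finite_atLeastAtMost]
          Collect_mem_eq Int_absorb1[OF S])
    ultimately show ?thesis by simp
  qed
  have "sum z {1..d+1} \<le> sum b {1..d+1}"
  proof -
    define \<mu> where "\<mu> i = (if i \<in> {1..d+1} then -1 else 0 :: int)" for i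
    have "\<mu> \<in> Lambda d" by (auto simp: Lambda_def \<mu>_def)
    then have "(\<Sum>k\<in>{1..d+1}. b k * of_int (wact (W \<mu>) \<mu> k)) \<le> (\<Sum>i\<in>{1..d+1}. of_int (\<mu> i) * z i)"
      using bound by blast
    moreover have "wact (W \<mu>) \<mu> k = -1" if "k \<in> {1..d+1}" for k
      using that permutes_in_image[OF permutes_inv[OF W[THEN conjunct1]]]
      by (simp add: wact_def \<mu>_def)
    ultimately show ?thesis by (simp add: \<mu>_def sum_negf)
  qed
  moreover have "sum b {1..d+1} \<le> sum z {1..d+1}"
    using subset_bound[of "{1..d+1}"] by simp
  ultimately show ?thesis
    using subset_bound unfolding subset_sums_above_def by simp
qed

lemma rearrangement_bound_iff_subset_sums_above:
  fixes b z :: "nat \<Rightarrow> real"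
  assumes W: "\<And>\<mu>. W \<mu> permutes {1..d+1} \<and> dominant d (wact (W \<mu>) \<mu>)"
  shows "(\<forall>\<mu>\<in>Lambda d. (\<Sum>k\<in>{1..d+1}. b k * of_int (wact (W \<mu>) \<mu> k)) \<le> (\<Sum>i\<in>{1..d+1}. of_int (\<mu> i) * z i))
     \<longleftrightarrow> subset_sums_above z b (d+1)"
  using subset_sums_above_of_rearrangement_bound[OF W] rearrangement_bound_of_subset_sums_above W
  by blast

lemma polygon_of_nat: "polygon r (real k) = sum_list (take k r)"
  by (simp add: polygon_def)

lemma polygon_interpolates:
  assumes "0 \<le> x" "x < real (length r)"
  shows "polygon r x = (1 - frac x) * sum_list (take (nat \<lfloor>x\<rfloor>) r) + frac x * sum_list (take (Suc (nat \<lfloor>x\<rfloor>)) r)"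
proof -
  have "nat \<lfloor>x\<rfloor> < length r" using assms by linarith
  then show ?thesis
    using assms by (simp add: polygon_def frac_def take_Suc_conv_app_nth algebra_simps)
qed

lemma poly_above_same_end_iff_partial_sums:
  assumes len: "length s = length r"
  shows "poly_above_same_end r s \<longleftrightarrow>
    (\<forall>k\<le>length r. sum_list (take k s) \<le> sum_list (take k r)) \<and> sum_list r = sum_list s"
proof
  assume "poly_above_same_end r s"
  then show "(\<forall>k\<le>length r. sum_list (take k s) \<le> sum_list (take k r)) \<and> sum_list r = sum_list s"
    using len unfolding poly_above_same_end_def
    by (metis atLeastAtMost_iff of_nat_0_le_iff of_nat_le_iff polygon_of_nat take_all order_refl)
next
  assume partial: "(\<forall>k\<le>length r. sum_list (take k s) \<le> sum_list (take k r)) \<and> sum_list r = sum_list s"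
  have "polygon s x \<le> polygon r x" if x: "x \<in> {0..real (length r)}" for x
  proof (cases "x = real (length r)")
    case True
    then show ?thesis using partial len by (simp add: polygon_of_nat)
  next
    case False
    then have x: "0 \<le> x" "x < real (length r)" using x by auto
    then have "Suc (nat \<lfloor>x\<rfloor>) \<le> length r" by linarith
    then show ?thesis
      unfolding polygon_interpolates[OF x] polygon_interpolates[OF x[unfolded len[symmetric]]]
      using partial frac_lt_1[of x] frac_ge_0[of x]
      by (intro add_mono mult_left_mono) auto
  qed
  then show "poly_above_same_end r s"
    using partial len unfolding poly_above_same_end_def by (simp add: polygon_of_nat)
qed

lemma sum_list_take_map_upt:
  assumes "k \<le> n"
  shows "sum_list (take k (map b [1..<n+1])) = (\<Sum>i\<in>{1..k}. b i)"
proof -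
  have "take k (map b [1..<n+1]) = map b [1..<k+1]"
    using assms by (simp add: take_map take_upt del: upt_Suc)
  then show ?thesis
    by (simp add: sum_list_distinct_conv_sum_set atLeastLessThanSuc_atLeastAtMost del: upt_Suc)
qed

lemma poly_above_same_end_sort_iff_subset_sums_above:
  fixes z b :: "nat \<Rightarrow> real"
  shows "poly_above_same_end (sort (map z [1..<n+1])) (map b [1..<n+1]) \<longleftrightarrow> subset_sums_above z b n"
proof -
  define s where "s = sort (map z [1..<n+1])"
  have len: "length s = n" "length (map b [1..<n+1]) = n" by (simp_all add: s_def)
  have total: "sum_list s = sum z {1..n}" "sum_list (map b [1..<n+1]) = sum b {1..n}"
    using sum_list_take_map_upt[of n n z] sum_list_take_map_upt[of n n b]
    by (simp_all add: s_def sum_mset_sum_list[symmetric] del: upt_Suc)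
  have "poly_above_same_end s (map b [1..<n+1]) \<longleftrightarrow>
      (\<forall>k\<le>n. sum_list (take k (map b [1..<n+1])) \<le> sum_list (take k s)) \<and> sum_list s = sum_list (map b [1..<n+1])"
    using poly_above_same_end_iff_partial_sums[of "map b [1..<n+1]" s] len by simp
  also have "\<dots> \<longleftrightarrow> (\<forall>k\<le>n. (\<Sum>i\<in>{1..k}. b i) \<le> sum_list (take k s)) \<and> sum z {1..n} = sum b {1..n}"
    using sum_list_take_map_upt[of _ n b] total by auto
  also have "\<dots> \<longleftrightarrow> subset_sums_above z b n"
    unfolding subset_sums_above_def s_def partial_sums_le_sort_iff ..
  finally show ?thesis unfolding s_def .
qed

theorem lemma5p1:
  fixes val :: "'k::field \<Rightarrow> real" and piL :: 'k and p e f d :: nat and a :: "nat \<Rightarrow> int"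
  assumes "padic_setting val piL p e f"
    and "\<forall>i\<in>{1..d}. a i \<le> a (i + 1)"
  shows "Txi val piL (p ^ f) d a =
    {\<zeta> \<in> Tprime d.
       poly_above_same_end
         (sort (map (\<lambda>i. val (zcoord piL (p ^ f) a \<zeta> i)) [1..<d + 2]))
         (map (\<lambda>i. real_of_int (a i) + real (i - 1) * real (e * f)) [1..<d + 2])}"
proof -
  have "\<zeta> \<in> Txi val piL (p ^ f) d a \<longleftrightarrow>
      poly_above_same_end (sort (map (\<lambda>i. val (zcoord piL (p ^ f) a \<zeta> i)) [1..<d + 1 + 1]))
        (map (xi_slope e f a) [1..<d + 1 + 1])"
    if \<zeta>: "\<zeta> \<in> Tprime d" for \<zeta>
  proof -
    have "\<zeta> \<in> Txi val piL (p ^ f) d a \<longleftrightarrow>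
        (\<forall>\<mu>\<in>Lambda d. (\<Sum>k\<in>{1..d+1}. xi_slope e f a k * of_int (wact (dom_perm d \<mu>) \<mu> k))
          \<le> (\<Sum>i\<in>{1..d+1}. of_int (\<mu> i) * val (zcoord piL (p ^ f) a \<zeta> i)))"
      using absK_le_absK_gamma_iff[OF assms(1) \<zeta> _ dom_perm[THEN conjunct1]] \<zeta>
      unfolding Txi_def gamma_dom_eq_gamma_dom_perm by blast
    also have "\<dots> \<longleftrightarrow> subset_sums_above (\<lambda>i. val (zcoord piL (p ^ f) a \<zeta> i)) (xi_slope e f a) (d+1)"
      by (rule rearrangement_bound_iff_subset_sums_above[OF dom_perm])
    finally show ?thesis
      by (simp only: poly_above_same_end_sort_iff_subset_sums_above)
  qed
  moreover have "Txi val piL (p ^ f) d a \<subseteq> Tprime d" unfolding Txi_def by blast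
  moreover have "d + 1 + 1 = d + 2" by simp
  ultimately show ?thesis
    unfolding xi_slope_def by auto
qed

end
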